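(* For $n=4$ (so $d_4=\frac{\sqrt5}{3}$), $$\lim_{h\to\sqrt5/3}\tilde B_4(h)=\frac{5\left(2\sqrt3+\ln(26-15\sqrt3)\right)}{4\ln(2-\sqrt3)},$$ and consequently $c_0(h)=\frac{1}{1-\tilde B_4(h)}$ satisfies $$\lim_{h\to\sqrt5/3}c_0(h)=\frac{1}{1-\frac{5\left(2\sqrt3+\ln(26-15\sqrt3)\right)}{4\ln(2-\sqrt3)}} .$$
   Context: For $n=4$: $W(u)=\frac{u^2}{2}-\frac{u^6}{30}$, $H(u,v)=\frac{v^2}{2}+W(u)$; for $h\in(0,\frac{\sqrt5}{3})$, $\Gamma_h$ is the periodic orbit in $\{H=h\}$ surrounding the origin of $u'=v$, $v'=-u+\frac15u^5$, oriented clockwise; $\tilde B_4(h)=\oint_{\Gamma_h}u^4v\,du\big/\oint_{\Gamma_h}v\,du$. *)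

theory Defs
  imports "HOL-Analysis.Analysis"
begin

definition W4 :: "real \<Rightarrow> real" where
  "W4 u = u^2/2 - u^6/30"

definition H4 :: "real \<Rightarrow> real \<Rightarrow> real" where
  "H4 u v = v^2/2 + W4 u"

text \<open>The periodic orbit Gamma_h surrounding the origin: the oval of the level set
  {H = h} lying in the strip |u| < 5^(1/4) (the saddles are at u = +-5^(1/4)).\<close>
definition Gamma4 :: "real \<Rightarrow> (real \<times> real) set" where
  "Gamma4 h = {(u, v). H4 u v = h \<and> \<bar>u\<bar> < root 4 5}"

definition amp4 :: "real \<Rightarrow> real" where
  "amp4 h = (THE a. 0 < a \<and> a < root 4 5 \<and> W4 a = h)"

definition vup4 :: "real \<Rightarrow> real \<Rightarrow> real" where
  "vup4 h u = sqrt (2 * (h - W4 u))"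

text \<open>Oriented line integral of P(u,v) du along Gamma_h traversed clockwise
  (the direction of the flow u' = v): the upper branch is run from u = -a to u = a,
  the lower branch from u = a back to u = -a.\<close>
definition loop_int4 :: "(real \<Rightarrow> real \<Rightarrow> real) \<Rightarrow> real \<Rightarrow> real" where
  "loop_int4 P h =
     integral {-amp4 h..amp4 h} (\<lambda>u. P u (vup4 h u))
     - integral {-amp4 h..amp4 h} (\<lambda>u. P u (- vup4 h u))"

definition B4t :: "real \<Rightarrow> real" where
  "B4t h = loop_int4 (\<lambda>u v. u^4 * v) h / loop_int4 (\<lambda>u v. v) h"

definition c0 :: "real \<Rightarrow> real" where
  "c0 h = 1 / (1 - B4t h)"

end

theory Submission imports Defs begin

text \<open>Both loop integrals are twice an integral over the fixed interval [-5^(1/4), 5^(1/4)]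
  of g(u) sqrt(2 max(0, h - W(u))), which is continuous in h because the square root is
  1/2-Hoelder. So the limit is the ratio of the integrals at the critical level h = sqrt 5 / 3,
  where 2(h - W(u)) = (r^2 - u^2)^2 (u^2 + 2r^2) / 15 with r = 5^(1/4): the square root
  becomes (r^2 - u^2) sqrt(u^2 + 2r^2) and both integrals are elementary, producing
  ln(2 + sqrt 3).\<close>

lemma root_4_5_pow_4: "root 4 5 ^ 4 = (5::real)"
  by (simp add: real_root_pow_pos2)

lemma root_4_5_pow_2: "root 4 5 ^ 2 = sqrt (5::real)"
proof -
  have "(root 4 5 ^ 2) ^ 2 = (5::real)" using root_4_5_pow_4 by (simp flip: power_mult)
  thus ?thesis by (intro real_sqrt_unique[symmetric]) auto
qed

lemma W4_abs: "W4 \<bar>u\<bar> = W4 u"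
  by (cases "u \<ge> 0") (simp_all add: W4_def)

lemma W4_strict_mono:
  assumes "0 \<le> x" "x < y" "y \<le> root 4 5"
  shows "W4 x < W4 y"
proof -
  have y4: "y ^ 4 \<le> 5" using power_mono[OF assms(3), of 4] assms root_4_5_pow_4 by simp
  have x2: "x ^ 2 < y ^ 2" and x4: "x ^ 4 < y ^ 4"
    using power_strict_mono[OF assms(2) assms(1)] by auto
  have "x ^ 2 * y ^ 2 < y ^ 2 * y ^ 2" using x2 assms by (intro mult_strict_right_mono) auto
  hence "x ^ 2 * y ^ 2 < y ^ 4" by (simp add: eval_nat_numeral)
  hence "0 < (y ^ 2 - x ^ 2) * (15 - (y ^ 4 + x ^ 2 * y ^ 2 + x ^ 4)) / 30"
    using x2 x4 y4 by (intro divide_pos_pos mult_pos_pos) auto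
  also have "\<dots> = W4 y - W4 x"
    unfolding W4_def by (simp add: field_simps eval_nat_numeral)
  finally show ?thesis by simp
qed

lemma W4_root_4_5: "W4 (root 4 5) = sqrt 5 / 3"
proof -
  have "root 4 5 ^ 6 = root 4 5 ^ 4 * (root 4 5 ^ 2 :: real)"
    by (simp flip: power_add del: real_root_pow_pos2)
  thus ?thesis unfolding W4_def root_4_5_pow_4 root_4_5_pow_2 by simp
qed

lemma amp4:
  assumes "0 < h" "h < sqrt 5 / 3"
  shows "0 < amp4 h" "amp4 h < root 4 5" "W4 (amp4 h) = h"
proof -
  have "continuous_on {0..root 4 5} W4" unfolding W4_def by (intro continuous_intros) auto
  then obtain a where a: "0 \<le> a" "a \<le> root 4 5" "W4 a = h"
    using IVT'[of W4 0 h "root 4 5"] assms W4_root_4_5 by (auto simp: W4_def)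
  have P: "0 < a \<and> a < root 4 5 \<and> W4 a = h"
    using a assms W4_root_4_5 by (auto simp: W4_def intro!: le_neq_trans)
  have "b = a" if "0 < b \<and> b < root 4 5 \<and> W4 b = h" for b
    using W4_strict_mono[of b a] W4_strict_mono[of a b] that P by (cases b a rule: linorder_cases) auto
  hence "amp4 h = a" unfolding amp4_def using P by (rule the_equality[rotated])
  thus "0 < amp4 h" "amp4 h < root 4 5" "W4 (amp4 h) = h" using P by auto
qed

lemma W4_le_iff_abs_le_amp4:
  assumes "0 < h" "h < sqrt 5 / 3" "\<bar>u\<bar> \<le> root 4 5"
  shows "W4 u \<le> h \<longleftrightarrow> \<bar>u\<bar> \<le> amp4 h"
  using W4_strict_mono[of "\<bar>u\<bar>" "amp4 h"] W4_strict_mono[of "amp4 h" "\<bar>u\<bar>"] amp4[OF assms(1,2)]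
    assms(3) W4_abs[of u]
  by (cases "\<bar>u\<bar>" "amp4 h" rule: linorder_cases) auto

subsection \<open>Reduction to a fixed interval\<close>

definition branch_int4 :: "(real \<Rightarrow> real) \<Rightarrow> real \<Rightarrow> real" where
  "branch_int4 g h = integral {-root 4 5..root 4 5} (\<lambda>u. g u * sqrt (2 * max 0 (h - W4 u)))"

lemma continuous_on_branch_integrand:
  assumes "continuous_on UNIV g"
  shows "continuous_on S (\<lambda>u. g u * sqrt (2 * max 0 (h - W4 u)))"
  using assms unfolding W4_def
  by (intro continuous_intros) (auto intro: continuous_on_subset)

lemma loop_int4_eq_branch_int4:
  assumes g: "continuous_on UNIV g" and h: "0 < h" "h < sqrt 5 / 3"
  shows "loop_int4 (\<lambda>u v. g u * v) h = 2 * branch_int4 g h"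
proof -
  define a where "a = amp4 h"
  define r where "r = (root 4 5 :: real)"
  define F where "F = (\<lambda>u. g u * sqrt (2 * max 0 (h - W4 u)))"
  have a: "0 < a" "a < r" using amp4[OF h] unfolding a_def r_def by auto
  have on_branch: "g u * vup4 h u = F u" if "u \<in> {-a..a}" for u
    using that a W4_le_iff_abs_le_amp4[OF h, of u] unfolding F_def vup4_def a_def r_def by auto
  have loop: "loop_int4 (\<lambda>u v. g u * v) h = 2 * integral {-a..a} F"
    using integral_cong[of "{-a..a}", OF on_branch] unfolding loop_int4_def a_def[symmetric] by simp
  have "(F has_integral integral {-a..a} F) {-a..a}"
    using continuous_on_branch_integrand[OF g] unfolding F_def
    by (blast intro: integrable_continuous_interval)
  hence "((\<lambda>u. if u \<in> {-a..a} then F u else 0) has_integral integral {-a..a} F) {-r..r}"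
    using a by (subst has_integral_restrict) auto
  moreover have "(if u \<in> {-a..a} then F u else 0) = F u" if "u \<in> {-r..r}" for u
    using that W4_le_iff_abs_le_amp4[OF h, of u] unfolding F_def a_def r_def
    by (auto simp: max_def abs_le_iff)
  ultimately have "(F has_integral integral {-a..a} F) {-r..r}"
    using has_integral_cong[of "{-r..r}" "\<lambda>u. if u \<in> {-a..a} then F u else 0" F] by blast
  hence "integral {-r..r} F = integral {-a..a} F" by blast
  thus ?thesis using loop unfolding branch_int4_def F_def r_def by simp
qed

lemma abs_sqrt_diff_le: "0 \<le> x \<Longrightarrow> 0 \<le> y \<Longrightarrow> \<bar>sqrt x - sqrt y\<bar> \<le> sqrt \<bar>x - y\<bar>"
proof -
  have *: "sqrt x - sqrt y \<le> sqrt \<bar>x - y\<bar>" if "0 \<le> x" "0 \<le> y" for x y :: real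
  proof (cases "y \<le> x")
    case True
    have "sqrt x = sqrt (y + (x - y))" by simp
    also have "\<dots> \<le> sqrt y + sqrt (x - y)" using True that by (intro sqrt_add_le_add_sqrt) auto
    finally show ?thesis using True by simp
  next
    case False
    thus ?thesis by (smt (verit) real_sqrt_ge_zero real_sqrt_le_mono)
  qed
  assume "0 \<le> x" "0 \<le> y"
  thus ?thesis using *[of x y] *[of y x] by (simp add: abs_minus_commute)
qed

lemma branch_int4_diff_le:
  assumes g: "continuous_on UNIV g"
  shows "\<bar>branch_int4 g h - branch_int4 g k\<bar>
           \<le> integral {-root 4 5..root 4 5} (\<lambda>u. \<bar>g u\<bar>) * sqrt (2 * \<bar>h - k\<bar>)"
proof -
  define r where "r = (root 4 5 :: real)"
  let ?F = "\<lambda>h u. g u * sqrt (2 * max 0 (h - W4 u))"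
  have iF: "?F h' integrable_on {-r..r}" for h'
    by (rule integrable_continuous_interval[OF continuous_on_branch_integrand[OF g]])
  have "(\<lambda>u. \<bar>g u\<bar> * sqrt (2 * \<bar>h - k\<bar>)) integrable_on {-r..r}"
    using g by (intro integrable_continuous_interval continuous_intros continuous_on_subset[OF g]) simp
  moreover have "norm (?F h u - ?F k u) \<le> \<bar>g u\<bar> * sqrt (2 * \<bar>h - k\<bar>)" for u
  proof -
    have "\<bar>sqrt (2 * max 0 (h - W4 u)) - sqrt (2 * max 0 (k - W4 u))\<bar>
            \<le> sqrt \<bar>2 * max 0 (h - W4 u) - 2 * max 0 (k - W4 u)\<bar>"
      by (rule abs_sqrt_diff_le) auto
    also have "\<dots> \<le> sqrt (2 * \<bar>h - k\<bar>)"
      by (intro real_sqrt_le_mono) (simp add: max_def abs_if)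
    finally have "\<bar>g u\<bar> * \<bar>sqrt (2 * max 0 (h - W4 u)) - sqrt (2 * max 0 (k - W4 u))\<bar>
                    \<le> \<bar>g u\<bar> * sqrt (2 * \<bar>h - k\<bar>)"
      by (rule mult_left_mono) simp
    thus ?thesis by (simp add: abs_mult right_diff_distrib[symmetric])
  qed
  ultimately have "norm (integral {-r..r} (\<lambda>u. ?F h u - ?F k u))
                     \<le> integral {-r..r} (\<lambda>u. \<bar>g u\<bar> * sqrt (2 * \<bar>h - k\<bar>))"
    by (intro integral_norm_bound_integral integrable_diff iF)
  thus ?thesis
    unfolding branch_int4_def r_def[symmetric] integral_diff[OF iF iF, symmetric]
    by (simp add: integral_mult_left)
qed

lemma isCont_branch_int4:
  assumes "continuous_on UNIV g"
  shows "isCont (branch_int4 g) k"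
proof -
  define M where "M = integral {-root 4 5..root 4 5} (\<lambda>u. \<bar>g u\<bar>)"
  have bound: "\<forall>h. norm (branch_int4 g h - branch_int4 g k) \<le> M * sqrt (2 * \<bar>h - k\<bar>)"
    using branch_int4_diff_le[OF assms] by (simp add: M_def)
  have "((\<lambda>h. M * sqrt (2 * \<bar>h - k\<bar>)) \<longlongrightarrow> M * sqrt (2 * \<bar>k - k\<bar>)) (at k)"
    by (intro tendsto_intros)
  hence "((\<lambda>h. branch_int4 g h - branch_int4 g k) \<longlongrightarrow> 0) (at k)"
    by (intro Lim_null_comparison[OF always_eventually[OF bound]]) simp
  thus ?thesis unfolding isCont_def by (simp add: LIM_zero_iff)
qed

subsection \<open>The critical level\<close>

lemma critical_level_factorization:
  fixes r u :: real
  assumes "r ^ 4 = 5"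
  shows "2 * (sqrt 5 / 3 - W4 u) = (r\<^sup>2 - u\<^sup>2)\<^sup>2 * (u\<^sup>2 + 2 * r\<^sup>2) / 15"
proof -
  have r2: "r\<^sup>2 = sqrt 5"
    using assms by (intro real_sqrt_unique[symmetric]) (auto simp flip: power_mult)
  have "(r\<^sup>2 - u\<^sup>2)\<^sup>2 * (u\<^sup>2 + 2 * r\<^sup>2) = u ^ 6 - 3 * r ^ 4 * u\<^sup>2 + 2 * r ^ 4 * r\<^sup>2"
    by (simp add: algebra_simps eval_nat_numeral)
  thus ?thesis unfolding W4_def assms r2[symmetric] by (simp add: field_simps)
qed

lemma branch_int4_critical_level:
  "branch_int4 g (sqrt 5 / 3) = integral {-root 4 5..root 4 5}
     (\<lambda>u. g u * ((root 4 5)\<^sup>2 - u\<^sup>2) * sqrt (u\<^sup>2 + 2 * (root 4 5)\<^sup>2)) / sqrt 15"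
proof -
  define r where "r = (root 4 5 :: real)"
  have "sqrt (2 * max 0 (sqrt 5 / 3 - W4 u)) = (r\<^sup>2 - u\<^sup>2) * sqrt (u\<^sup>2 + 2 * r\<^sup>2) / sqrt 15"
    if "u \<in> {-r..r}" for u
  proof -
    have "\<bar>u\<bar>\<^sup>2 \<le> r\<^sup>2" using that by (intro power_mono) auto
    moreover have "2 * max 0 (sqrt 5 / 3 - W4 u) = (r\<^sup>2 - u\<^sup>2)\<^sup>2 * (u\<^sup>2 + 2 * r\<^sup>2) / 15"
      using critical_level_factorization[of r u] root_4_5_pow_4 unfolding r_def
      by (smt (verit) zero_le_divide_iff zero_le_power2 mult_nonneg_nonneg)
    ultimately show ?thesis
      by (simp only: real_sqrt_divide real_sqrt_mult real_sqrt_abs) simp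
  qed
  hence "branch_int4 g (sqrt 5 / 3)
           = integral {-r..r} (\<lambda>u. g u * (r\<^sup>2 - u\<^sup>2) * sqrt (u\<^sup>2 + 2 * r\<^sup>2) / sqrt 15)"
    unfolding branch_int4_def r_def[symmetric] by (intro integral_cong) simp
  thus ?thesis unfolding r_def by (simp add: integral_divide)
qed

subsection \<open>Two elementary integrals\<close>

lemma DERIV_poly_sqrt_plus_ln:
  fixes c k :: real and p p' q :: "real \<Rightarrow> real"
  assumes c: "c > 0"
    and p': "(p has_real_derivative p' u) (at u)"
    and ode: "p' u * (u\<^sup>2 + c) + p u * u + k = q u * (u\<^sup>2 + c)"
  shows "((\<lambda>u. p u * sqrt (u\<^sup>2 + c) + k * ln (u + sqrt (u\<^sup>2 + c)))
           has_real_derivative q u * sqrt (u\<^sup>2 + c)) (at u)"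
proof -
  define S where "S = sqrt (u\<^sup>2 + c)"
  have S0: "S > 0" and S2: "S\<^sup>2 = u\<^sup>2 + c" unfolding S_def using c by (auto intro: add_nonneg_pos)
  have "\<bar>u\<bar> < S" unfolding S_def using c
    by (metis abs_ge_zero add.commute less_add_same_cancel2 real_sqrt_abs real_sqrt_less_mono)
  hence uS: "u + S > 0" by linarith
  have dS: "((\<lambda>u. sqrt (u\<^sup>2 + c)) has_real_derivative u / S) (at u)"
    using S0 unfolding S_def by (auto intro!: derivative_eq_intros simp: field_simps)
  have "((\<lambda>u. ln (u + sqrt (u\<^sup>2 + c))) has_real_derivative (1 + u / S) / (u + S)) (at u)"
    using DERIV_chain2[OF DERIV_ln_divide DERIV_add[OF DERIV_ident dS]] uS unfolding S_def by simp
  moreover have "1 + u / S = (u + S) / S" using S0 by (simp add: field_simps)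
  hence "(1 + u / S) / (u + S) = 1 / S" using uS by simp
  ultimately have dL: "((\<lambda>u. ln (u + sqrt (u\<^sup>2 + c))) has_real_derivative 1 / S) (at u)" by simp
  have "((\<lambda>u. p u * sqrt (u\<^sup>2 + c) + k * ln (u + sqrt (u\<^sup>2 + c)))
          has_real_derivative p' u * S + p u * (u / S) + k * (1 / S)) (at u)"
    using DERIV_add[OF DERIV_mult[OF p' dS] DERIV_cmult[OF dL, of k]] unfolding S_def
    by (simp add: mult.commute)
  also have "p' u * S + p u * (u / S) + k * (1 / S) = (p' u * S\<^sup>2 + p u * u + k) / S"
    using S0 by (simp add: field_simps power2_eq_square)
  also have "\<dots> = q u * S\<^sup>2 / S" using ode S2 by simp
  also have "\<dots> = q u * S" using S0 by (simp add: power2_eq_square)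
  finally show ?thesis unfolding S_def .
qed

(* Odd polynomials p solving the identity of DERIV_poly_sqrt_plus_ln for q = s - u^2
   and q = u^4 (s - u^2). *)
definition prim_poly0 :: "real \<Rightarrow> real \<Rightarrow> real \<Rightarrow> real" where
  "prim_poly0 s c u = s * u / 2 - u * (2 * u^2 + c) / 8"

definition prim_poly4 :: "real \<Rightarrow> real \<Rightarrow> real \<Rightarrow> real" where
  "prim_poly4 s c u = s * u^5 / 6 + s * c * u^3 / 24 - s * c^2 * u / 16
     - u^7 / 8 - c * u^5 / 48 + 5 * c^2 * u^3 / 192 - 5 * c^3 * u / 128"

lemma DERIV_prim0:
  assumes "c > 0"
  shows "((\<lambda>u. prim_poly0 s c u * sqrt (u\<^sup>2 + c) + (s * c / 2 + c^2 / 8) * ln (u + sqrt (u\<^sup>2 + c)))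
           has_real_derivative (s - u^2) * sqrt (u\<^sup>2 + c)) (at u)"
proof (rule DERIV_poly_sqrt_plus_ln[OF assms])
  show "(prim_poly0 s c has_real_derivative s / 2 - (6 * u^2 + c) / 8) (at u)"
    unfolding prim_poly0_def by (auto intro!: derivative_eq_intros simp: algebra_simps power2_eq_square)
  show "(s / 2 - (6 * u^2 + c) / 8) * (u\<^sup>2 + c) + prim_poly0 s c u * u + (s * c / 2 + c^2 / 8)
          = (s - u^2) * (u\<^sup>2 + c)"
    unfolding prim_poly0_def by (simp add: field_simps) algebra
qed

lemma DERIV_prim4:
  assumes "c > 0"
  shows "((\<lambda>u. prim_poly4 s c u * sqrt (u\<^sup>2 + c) + (s * c^3 / 16 + 5 * c^4 / 128) * ln (u + sqrt (u\<^sup>2 + c)))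
           has_real_derivative (u^4 * (s - u^2)) * sqrt (u\<^sup>2 + c)) (at u)"
proof (rule DERIV_poly_sqrt_plus_ln[OF assms])
  let ?q = "5 * s * u^4 / 6 + s * c * u^2 / 8 - s * c^2 / 16 - 7 * u^6 / 8 - 5 * c * u^4 / 48
              + 5 * c^2 * u^2 / 64 - 5 * c^3 / 128"
  show "(prim_poly4 s c has_real_derivative ?q) (at u)"
    unfolding prim_poly4_def by (auto intro!: derivative_eq_intros simp: algebra_simps)
  show "?q * (u\<^sup>2 + c) + prim_poly4 s c u * u + (s * c^3 / 16 + 5 * c^4 / 128) = u^4 * (s - u^2) * (u\<^sup>2 + c)"
    unfolding prim_poly4_def by (simp add: field_simps) algebra
qed

lemma has_integral_from_DERIV:
  fixes F f :: "real \<Rightarrow> real"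
  assumes "a \<le> b" "\<And>u. (F has_real_derivative f u) (at u)"
  shows "(f has_integral (F b - F a)) {a..b}"
  using assms
  by (intro fundamental_theorem_of_calculus)
     (auto simp: has_real_derivative_iff_has_vector_derivative intro: has_vector_derivative_at_within)

lemma sqrt_endpoint: "0 < r \<Longrightarrow> sqrt (r\<^sup>2 + 2 * r\<^sup>2) = sqrt 3 * (r::real)"
  by (simp add: real_sqrt_mult)

lemma ln_endpoint_diff:
  fixes r :: real
  assumes r: "r > 0"
  shows "ln (r + sqrt 3 * r) - ln (- r + sqrt 3 * r) = ln (2 + sqrt 3)"
proof -
  define X where "X = (sqrt 3 - 1) * r"
  have X: "X > 0" using r unfolding X_def by simp
  have "r + sqrt 3 * r = (2 + sqrt 3) * X" "- r + sqrt 3 * r = X"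
    unfolding X_def by (simp_all add: algebra_simps)
  moreover have "ln ((2 + sqrt 3) * X) = ln (2 + sqrt 3) + ln X"
    using X by (intro ln_mult_pos) (auto intro: add_pos_nonneg)
  ultimately show ?thesis by simp
qed

lemma has_integral_critical0:
  fixes r :: real
  assumes r: "r > 0"
  shows "((\<lambda>u. (r\<^sup>2 - u\<^sup>2) * sqrt (u\<^sup>2 + 2 * r\<^sup>2)) has_integral 3/2 * r^4 * ln (2 + sqrt 3)) {-r..r}"
proof -
  define F where "F = (\<lambda>u. prim_poly0 (r\<^sup>2) (2 * r\<^sup>2) u * sqrt (u\<^sup>2 + 2 * r\<^sup>2)
    + (r\<^sup>2 * (2 * r\<^sup>2) / 2 + (2 * r\<^sup>2)^2 / 8) * ln (u + sqrt (u\<^sup>2 + 2 * r\<^sup>2)))"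
  have "((\<lambda>u. (r\<^sup>2 - u\<^sup>2) * sqrt (u\<^sup>2 + 2 * r\<^sup>2)) has_integral (F r - F (-r))) {-r..r}"
    using r unfolding F_def by (intro has_integral_from_DERIV DERIV_prim0) auto
  moreover have "prim_poly0 (r\<^sup>2) (2 * r\<^sup>2) r = 0" "prim_poly0 (r\<^sup>2) (2 * r\<^sup>2) (-r) = 0"
    unfolding prim_poly0_def by (simp_all add: field_simps power2_eq_square power3_eq_cube)
  hence "F r - F (-r) = 3/2 * r^4 * (ln (r + sqrt 3 * r) - ln (- r + sqrt 3 * r))"
    unfolding F_def power2_minus sqrt_endpoint[OF r] by (simp add: algebra_simps eval_nat_numeral)
  ultimately show ?thesis using ln_endpoint_diff[OF r] by simp
qed

lemma has_integral_critical4: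
  fixes r :: real
  assumes r: "r > 0"
  shows "((\<lambda>u. u^4 * (r\<^sup>2 - u\<^sup>2) * sqrt (u\<^sup>2 + 2 * r\<^sup>2))
           has_integral - 3/4 * sqrt 3 * r^8 + 9/8 * r^8 * ln (2 + sqrt 3)) {-r..r}"
proof -
  define F where "F = (\<lambda>u. prim_poly4 (r\<^sup>2) (2 * r\<^sup>2) u * sqrt (u\<^sup>2 + 2 * r\<^sup>2)
    + (r\<^sup>2 * (2 * r\<^sup>2)^3 / 16 + 5 * (2 * r\<^sup>2)^4 / 128) * ln (u + sqrt (u\<^sup>2 + 2 * r\<^sup>2)))"
  have "((\<lambda>u. u^4 * (r\<^sup>2 - u\<^sup>2) * sqrt (u\<^sup>2 + 2 * r\<^sup>2)) has_integral (F r - F (-r))) {-r..r}"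
    using r unfolding F_def by (intro has_integral_from_DERIV DERIV_prim4) auto
  moreover have "prim_poly4 (r\<^sup>2) (2 * r\<^sup>2) r = - 3/8 * r^7" "prim_poly4 (r\<^sup>2) (2 * r\<^sup>2) (-r) = 3/8 * r^7"
    unfolding prim_poly4_def by (simp_all add: field_simps eval_nat_numeral)
  hence "F r - F (-r) = - 3/4 * sqrt 3 * r^8 + 9/8 * r^8 * (ln (r + sqrt 3 * r) - ln (- r + sqrt 3 * r))"
    unfolding F_def power2_minus sqrt_endpoint[OF r] by (simp add: algebra_simps eval_nat_numeral)
  ultimately show ?thesis using ln_endpoint_diff[OF r] by simp
qed

lemma ln_2_plus_sqrt_3_bounds: "0 < ln (2 + sqrt 3)" "ln (2 + sqrt 3) < (3/2::real)"
proof -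
  show "0 < ln (2 + sqrt (3::real))" by (rule ln_gt_zero) (use real_sqrt_ge_zero[of 3] in linarith)
  have "sqrt 3 < (7/4::real)" by (rule power2_less_imp_less) (simp_all add: power2_eq_square)
  hence "2 + sqrt 3 < (1 + (3/2) / real 8) ^ 8" by (simp add: power_divide)
  also have "\<dots> \<le> exp (3/2)" by (rule exp_ge_one_plus_x_over_n_power_n) auto
  finally have "2 + sqrt 3 < exp (3/2::real)" .
  moreover have "0 < 2 + sqrt (3::real)" using real_sqrt_ge_zero[of 3] by linarith
  ultimately show "ln (2 + sqrt 3) < (3/2::real)" by (metis ln_exp ln_less_cancel_iff exp_gt_zero)
qed

lemma sqrt_3_gt: "sqrt 3 > (33/20::real)"
  by (rule power2_less_imp_less) (simp_all add: power2_eq_square)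

lemma ln_2_minus_sqrt_3: "ln (2 - sqrt 3) = - ln (2 + sqrt (3::real))"
  and ln_26_minus_15_sqrt_3: "ln (26 - 15 * sqrt 3) = - 3 * ln (2 + sqrt (3::real))"
proof -
  have q: "sqrt 3 * sqrt 3 = (3::real)" by simp
  have "(2 + sqrt 3) * (2 - sqrt 3) = (1::real)" by (simp add: algebra_simps q)
  hence "inverse (2 + sqrt 3) = 2 - sqrt (3::real)" by (rule inverse_unique)
  thus l1: "ln (2 - sqrt 3) = - ln (2 + sqrt (3::real))" by (simp flip: ln_inverse)
  have "(2 - sqrt 3) ^ 3 = 8 - 12 * sqrt 3 + 6 * (sqrt 3 * sqrt 3) - (sqrt 3 * sqrt 3) * sqrt (3::real)"
    by (simp add: power3_eq_cube algebra_simps)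
  hence "26 - 15 * sqrt 3 = (2 - sqrt 3) ^ 3" unfolding q by simp
  thus "ln (26 - 15 * sqrt 3) = - 3 * ln (2 + sqrt (3::real))" using l1 by (simp add: ln_realpow)
qed

lemma branch_int4_ratio_critical:
  "branch_int4 (\<lambda>u. u^4) (sqrt 5 / 3) / branch_int4 (\<lambda>u. 1) (sqrt 5 / 3)
     = 5 * (3 * ln (2 + sqrt 3) - 2 * sqrt 3) / (4 * ln (2 + sqrt 3))"
  and branch_int4_critical_nonzero: "branch_int4 (\<lambda>u. 1) (sqrt 5 / 3) \<noteq> 0"
proof -
  define r where "r = (root 4 5 :: real)"
  define L where "L = ln (2 + sqrt (3::real))"
  have r: "r > 0" "r ^ 4 = 5" using root_4_5_pow_4 unfolding r_def by auto
  hence r8: "r ^ 8 = 25" using power_mult[of r 4 2] by simp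
  have L: "L > 0" unfolding L_def using ln_2_plus_sqrt_3_bounds by simp
  have I4: "branch_int4 (\<lambda>u. u^4) (sqrt 5 / 3) = (- 3/4 * sqrt 3 * 25 + 9/8 * 25 * L) / sqrt 15"
    using integral_unique[OF has_integral_critical4[OF r(1)]] r8
    unfolding branch_int4_critical_level r_def[symmetric] L_def by simp
  have I1: "branch_int4 (\<lambda>u. 1) (sqrt 5 / 3) = 3/2 * 5 * L / sqrt 15"
    using integral_unique[OF has_integral_critical0[OF r(1)]] r(2)
    unfolding branch_int4_critical_level r_def[symmetric] L_def by (simp add: field_simps)
  show "branch_int4 (\<lambda>u. 1) (sqrt 5 / 3) \<noteq> 0" using I1 L by simp
  show "branch_int4 (\<lambda>u. u^4) (sqrt 5 / 3) / branch_int4 (\<lambda>u. 1) (sqrt 5 / 3)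
          = 5 * (3 * ln (2 + sqrt 3) - 2 * sqrt 3) / (4 * ln (2 + sqrt 3))"
    unfolding I4 I1 L_def[symmetric] using L by (simp add: field_simps)
qed

lemma B4t_eq_branch_int4_ratio:
  assumes "0 < h" "h < sqrt 5 / 3"
  shows "B4t h = branch_int4 (\<lambda>u. u^4) h / branch_int4 (\<lambda>u. 1) h"
  using loop_int4_eq_branch_int4[OF _ assms, of "\<lambda>u. u^4"] loop_int4_eq_branch_int4[OF _ assms, of "\<lambda>u. 1"]
  unfolding B4t_def by (simp add: continuous_intros)

theorem mainTheorem8:
  shows "(B4t \<longlongrightarrow>
            5 * (2 * sqrt 3 + ln (26 - 15 * sqrt 3)) / (4 * ln (2 - sqrt 3)))
           (at_left (sqrt 5 / 3))
       \<and> (c0 \<longlongrightarrow>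
            1 / (1 - 5 * (2 * sqrt 3 + ln (26 - 15 * sqrt 3)) / (4 * ln (2 - sqrt 3))))
           (at_left (sqrt 5 / 3))"
proof -
  define d where "d = sqrt 5 / (3::real)"
  define T where "T = 5 * (3 * ln (2 + sqrt 3) - 2 * sqrt 3) / (4 * ln (2 + sqrt (3::real)))"
  have T: "5 * (2 * sqrt 3 + ln (26 - 15 * sqrt 3)) / (4 * ln (2 - sqrt 3)) = T"
    unfolding T_def ln_2_minus_sqrt_3 ln_26_minus_15_sqrt_3 using ln_2_plus_sqrt_3_bounds
    by (simp add: field_simps)
  have "isCont (\<lambda>h. branch_int4 (\<lambda>u. u^4) h / branch_int4 (\<lambda>u. 1) h) d"
    using branch_int4_critical_nonzero unfolding d_def
    by (intro isCont_divide isCont_branch_int4) (auto intro: continuous_intros)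
  hence "((\<lambda>h. branch_int4 (\<lambda>u. u^4) h / branch_int4 (\<lambda>u. 1) h) \<longlongrightarrow> T) (at_left d)"
    unfolding isCont_def branch_int4_ratio_critical[folded d_def T_def, symmetric]
    by (rule filterlim_mono) (simp_all add: at_le)
  moreover have "eventually (\<lambda>h. branch_int4 (\<lambda>u. u^4) h / branch_int4 (\<lambda>u. 1) h = B4t h) (at_left d)"
    using eventually_at_left_real[of 0 d] B4t_eq_branch_int4_ratio unfolding d_def
    by (auto elim!: eventually_mono)
  ultimately have B4t: "(B4t \<longlongrightarrow> T) (at_left d)" by (rule Lim_transform_eventually)
  have "T \<noteq> 1"
    using ln_2_plus_sqrt_3_bounds sqrt_3_gt unfolding T_def by (simp add: field_simps)
  hence "(c0 \<longlongrightarrow> 1 / (1 - T)) (at_left d)"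
    unfolding c0_def[abs_def] by (intro tendsto_intros B4t) simp
  thus ?thesis using B4t unfolding T d_def by simp
qed

end
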